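(* Let $f:2^V\to\mathbb{R}_+$ be nonnegative and let $g:2^V\to\mathbb{R}$ be defined by $g(S)=f(S)-f(\emptyset)$ for all $S\subseteq V$. Then: (i) $f(T)/f(S)\le g(T)/g(S)$ for all $S,T\subseteq V$ with $f(S)\le f(T)$ (whenever these quotients are defined); (ii) $g$ is nonnegative and monotone if $f$ is monotone; (iii) $g$ is supermodular if $f$ is supermodular; (iv) $g$ is $r$-decomposable if $f$ is monotone, supermodular and $r$-decomposable.
   Context: $V$ is a finite set. Supermodular: $h(A)+h(B)\le h(A\cup B)+h(A\cap B)$ for all $A,B$; monotone: $h(B)\le h(A)$ for $B\subseteq A$. A function $h$ on $2^V$ is $r$-decomposable if there exist subsets $V_1,\dots,V_m\subseteq V$ with $|V_i|\le r$ and nonnegative supermodular functions $h_i:2^{V_i}\to\mathbb{R}_+$ such that $h(S)=\sum_{i=1}^m h_i(S\cap V_i)$ for all $S\subseteq V$. *)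

theory Defs
  imports Complex_Main
begin

text \<open>Set functions on 2^V are modelled as functions on 'a set, only their values on subsets of V matter.\<close>

definition nonneg_on :: "'a set \<Rightarrow> ('a set \<Rightarrow> real) \<Rightarrow> bool" where
  "nonneg_on V h \<longleftrightarrow> (\<forall>S. S \<subseteq> V \<longrightarrow> 0 \<le> h S)"

definition supermodular_on :: "'a set \<Rightarrow> ('a set \<Rightarrow> real) \<Rightarrow> bool" where
  "supermodular_on V h \<longleftrightarrow>
     (\<forall>A B. A \<subseteq> V \<longrightarrow> B \<subseteq> V \<longrightarrow> h A + h B \<le> h (A \<union> B) + h (A \<inter> B))"

definition monotone_on_sets :: "'a set \<Rightarrow> ('a set \<Rightarrow> real) \<Rightarrow> bool" where
  "monotone_on_sets V h \<longleftrightarrow> (\<forall>A B. A \<subseteq> V \<longrightarrow> B \<subseteq> A \<longrightarrow> h B \<le> h A)"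

definition decomposable :: "'a set \<Rightarrow> nat \<Rightarrow> ('a set \<Rightarrow> real) \<Rightarrow> bool" where
  "decomposable V r h \<longleftrightarrow>
     (\<exists>(m::nat) (Vs :: nat \<Rightarrow> 'a set) (hs :: nat \<Rightarrow> 'a set \<Rightarrow> real).
        (\<forall>i<m. Vs i \<subseteq> V \<and> card (Vs i) \<le> r \<and>
               nonneg_on (Vs i) (hs i) \<and> supermodular_on (Vs i) (hs i)) \<and>
        (\<forall>S. S \<subseteq> V \<longrightarrow> h S = (\<Sum>i<m. hs i (S \<inter> Vs i))))"

end

theory Submission
  imports Defs
begin

text \<open>Parts (i)--(iii) are elementary: subtracting the constant \<open>c = f {} \<ge> 0\<close> from
  \<open>f S \<le> f T\<close> can only increase their ratio, and shifting by a constant preserves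
  monotonicity and supermodularity. For (iv), write \<open>g S = \<Sum>\<^sub>i (h\<^sub>i (S \<inter> V\<^sub>i) - h\<^sub>i {})\<close>.
  The summands are supermodular but may be negative; by supermodularity each one dominates its
  modular part \<open>X \<mapsto> \<Sum>\<^sub>v\<^sub>\<in>\<^sub>X (h\<^sub>i {v} - h\<^sub>i {})\<close>. Replacing this modular part by the nonnegative one
  \<open>X \<mapsto> \<Sum>\<^sub>v\<^sub>\<in>\<^sub>X g {v} / n\<^sub>v\<close>, where \<open>n\<^sub>v\<close> counts the \<open>V\<^sub>i\<close> containing \<open>v\<close>, makes each summand
  nonnegative and leaves the total unchanged, because both modular parts sum to \<open>\<Sum>\<^sub>v\<^sub>\<in>\<^sub>S g {v}\<close>.\<close>

lemma supermodular_onD: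
  "supermodular_on V h \<Longrightarrow> A \<subseteq> V \<Longrightarrow> B \<subseteq> V \<Longrightarrow> h A + h B \<le> h (A \<union> B) + h (A \<inter> B)"
  unfolding supermodular_on_def by blast

lemma monotone_on_setsD:
  "monotone_on_sets V h \<Longrightarrow> A \<subseteq> V \<Longrightarrow> B \<subseteq> A \<Longrightarrow> h B \<le> h A"
  unfolding monotone_on_sets_def by blast

lemma ratio_le_shifted_ratio:
  fixes a b c :: real
  assumes "0 \<le> c" "c < a" "a \<le> b"
  shows "b / a \<le> (b - c) / (a - c)"
proof -
  have "b * (a - c) \<le> (b - c) * a"
    using mult_left_mono[OF assms(3) assms(1)] by (simp add: algebra_simps)
  then show ?thesis
    using assms by (simp add: divide_simps)
qed

lemma monotone_on_sets_shift:
  assumes "monotone_on_sets V f" "\<forall>S. S \<subseteq> V \<longrightarrow> g S = f S - c"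
  shows "monotone_on_sets V g"
  unfolding monotone_on_sets_def
proof (intro allI impI)
  fix A B assume AB: "A \<subseteq> V" "B \<subseteq> A"
  then have "f B \<le> f A"
    by (rule monotone_on_setsD[OF assms(1)])
  moreover have "g A = f A - c" "g B = f B - c"
    using AB assms(2) by auto
  ultimately show "g B \<le> g A"
    by simp
qed

lemma nonneg_on_shift_empty:
  assumes "monotone_on_sets V f" "\<forall>S. S \<subseteq> V \<longrightarrow> g S = f S - f {}"
  shows "nonneg_on V g"
  unfolding nonneg_on_def
proof (intro allI impI)
  fix S assume "S \<subseteq> V"
  moreover from this have "f {} \<le> f S"
    using monotone_on_setsD[OF assms(1)] by blast
  ultimately show "0 \<le> g S"
    using assms(2) by simp
qed

lemma supermodular_on_shift:
  assumes "supermodular_on V f" "\<forall>S. S \<subseteq> V \<longrightarrow> g S = f S - c"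
  shows "supermodular_on V g"
  unfolding supermodular_on_def
proof (intro allI impI)
  fix A B assume AB: "A \<subseteq> V" "B \<subseteq> V"
  then have "f A + f B \<le> f (A \<union> B) + f (A \<inter> B)"
    by (rule supermodular_onD[OF assms(1)])
  moreover have "A \<union> B \<subseteq> V" "A \<inter> B \<subseteq> V"
    using AB by auto
  ultimately show "g A + g B \<le> g (A \<union> B) + g (A \<inter> B)"
    using AB assms(2) by simp
qed

lemma supermodular_on_add_modular:
  assumes "finite W" "supermodular_on W h"
  shows "supermodular_on W (\<lambda>X. h X + (\<Sum>v\<in>X. a v))"
  unfolding supermodular_on_def
proof (intro allI impI)
  fix A B assume AB: "A \<subseteq> W" "B \<subseteq> W"
  then have "h A + h B \<le> h (A \<union> B) + h (A \<inter> B)"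
    by (rule supermodular_onD[OF assms(2)])
  moreover have "sum a A + sum a B = sum a (A \<union> B) + sum a (A \<inter> B)"
    using AB assms(1) finite_subset sum.union_inter by metis
  ultimately show "h A + sum a A + (h B + sum a B)
      \<le> h (A \<union> B) + sum a (A \<union> B) + (h (A \<inter> B) + sum a (A \<inter> B))"
    by linarith
qed

lemma supermodular_on_singletons_le:
  assumes "supermodular_on W h" "finite X" "X \<subseteq> W"
  shows "(\<Sum>v\<in>X. h {v} - h {}) \<le> h X - h {}"
  using assms(2,3)
proof (induction X rule: finite_induct)
  case empty
  then show ?case by simp
next
  case (insert x X)
  then have "h X + h {x} \<le> h (X \<union> {x}) + h (X \<inter> {x})"
    by (intro supermodular_onD[OF assms(1)]) simp_all
  moreover have "X \<inter> {x} = {}"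
    using insert.hyps(2) by blast
  ultimately show ?case
    using insert by simp
qed

lemma nonneg_supermodular_on_modular_correction:
  assumes "finite W" "supermodular_on W h" "\<forall>v\<in>W. 0 \<le> a v"
  defines "h' \<equiv> \<lambda>X. h X - h {} + (\<Sum>v\<in>X. a v - (h {v} - h {}))"
  shows "nonneg_on W h'" and "supermodular_on W h'"
proof -
  show "nonneg_on W h'"
    unfolding nonneg_on_def
  proof (intro allI impI)
    fix X assume X: "X \<subseteq> W"
    then have "(\<Sum>v\<in>X. h {v} - h {}) \<le> h X - h {}"
      using assms(1,2) finite_subset supermodular_on_singletons_le by blast
    moreover have "0 \<le> (\<Sum>v\<in>X. a v)"
      using X assms(3) by (auto intro: sum_nonneg)
    ultimately show "0 \<le> h' X"
      unfolding h'_def sum_subtractf by linarith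
  qed
  show "supermodular_on W h'"
    using supermodular_on_add_modular[OF assms(1,2), of "\<lambda>v. a v - (h {v} - h {})"]
    by (rule supermodular_on_shift[where c = "h {}"]) (simp add: h'_def)
qed

lemma sum_parts_singleton:
  fixes h :: "nat \<Rightarrow> 'a set \<Rightarrow> real"
  assumes "\<forall>S. S \<subseteq> V \<longrightarrow> f S = (\<Sum>i<m. h i (S \<inter> Vs i))" "v \<in> V"
  shows "f {v} - f {} = (\<Sum>i | i < m \<and> v \<in> Vs i. h i {v} - h i {})"
proof -
  have "f {v} - f {} = (\<Sum>i<m. h i ({v} \<inter> Vs i) - h i {})"
    using assms by (simp add: sum_subtractf)
  also have "\<dots> = (\<Sum>i<m. if v \<in> Vs i then h i {v} - h i {} else 0)"
    by (intro sum.cong) auto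
  also have "\<dots> = (\<Sum>i | i < m \<and> v \<in> Vs i. h i {v} - h i {})"
    by (simp add: sum.If_cases Int_def)
  finally show ?thesis .
qed

lemma sum_Int_parts_swap:
  fixes m :: nat
  assumes "finite S"
  shows "(\<Sum>i<m. \<Sum>v\<in>S \<inter> Vs i. c i v) = (\<Sum>v\<in>S. \<Sum>i | i < m \<and> v \<in> Vs i. c i v)"
  using sum.swap_restrict[of "{..<m}" S c "\<lambda>i v. v \<in> Vs i"] assms by (simp add: Int_def)

lemma decomposable_shift_empty:
  assumes "finite V" "decomposable V r f" "\<forall>v\<in>V. f {} \<le> f {v}"
    and g: "\<forall>S. S \<subseteq> V \<longrightarrow> g S = f S - f {}"
  shows "decomposable V r g"
proof -
  obtain m :: nat and Vs hs where
    parts: "\<forall>i<m. Vs i \<subseteq> V \<and> card (Vs i) \<le> r \<and>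
              nonneg_on (Vs i) (hs i) \<and> supermodular_on (Vs i) (hs i)" and
    f: "\<forall>S. S \<subseteq> V \<longrightarrow> f S = (\<Sum>i<m. hs i (S \<inter> Vs i))"
    using assms(2) unfolding decomposable_def by blast
  define I where "I v = {i. i < m \<and> v \<in> Vs i}" for v
  \<comment> \<open>For \<open>I v = {}\<close> the division by zero is harmless: \<open>a v\<close> then occurs in no \<open>hs' i\<close>.\<close>
  define a where "a v = g {v} / card (I v)" for v
  define c where "c i v = a v - (hs i {v} - hs i {})" for i v
  define hs' where "hs' i X = hs i X - hs i {} + (\<Sum>v\<in>X. c i v)" for i X
  have g_sum: "g S = (\<Sum>i<m. hs i (S \<inter> Vs i) - hs i {})" if "S \<subseteq> V" for S
    using that g f by (simp add: sum_subtractf)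
  have c_cancels: "(\<Sum>i\<in>I v. c i v) = 0" if "v \<in> V" for v
  proof -
    have "g {v} = f {v} - f {}"
      using g that by simp
    also have "\<dots> = (\<Sum>i\<in>I v. hs i {v} - hs i {})"
      unfolding I_def by (rule sum_parts_singleton[OF f that])
    finally have g_v: "g {v} = (\<Sum>i\<in>I v. hs i {v} - hs i {})" .
    have "finite (I v)"
      by (simp add: I_def)
    then have "(\<Sum>i\<in>I v. a v) = g {v}"
      using g_v by (cases "I v = {}") (simp_all add: a_def)
    then show ?thesis
      unfolding c_def sum_subtractf g_v by simp
  qed
  show ?thesis
    unfolding decomposable_def
  proof (intro exI[of _ m] exI[of _ Vs] exI[of _ hs'] conjI allI impI)
    fix i assume "i < m"
    then have Vi: "Vs i \<subseteq> V" "card (Vs i) \<le> r" "supermodular_on (Vs i) (hs i)"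
      using parts by simp_all
    then show "Vs i \<subseteq> V" "card (Vs i) \<le> r"
      by simp_all
    have "finite (Vs i)"
      using Vi(1) assms(1) by (rule finite_subset)
    moreover have "\<forall>v\<in>Vs i. 0 \<le> a v"
      using Vi(1) assms(3) g by (auto simp: a_def)
    moreover have "hs' i = (\<lambda>X. hs i X - hs i {} + (\<Sum>v\<in>X. a v - (hs i {v} - hs i {})))"
      by (simp add: hs'_def c_def fun_eq_iff)
    ultimately show "nonneg_on (Vs i) (hs' i)" "supermodular_on (Vs i) (hs' i)"
      using nonneg_supermodular_on_modular_correction[OF _ Vi(3)] by simp_all
  next
    fix S assume S: "S \<subseteq> V"
    then have "finite S"
      using assms(1) finite_subset by blast
    then have "(\<Sum>i<m. \<Sum>v\<in>S \<inter> Vs i. c i v) = (\<Sum>v\<in>S. \<Sum>i\<in>I v. c i v)"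
      unfolding I_def by (rule sum_Int_parts_swap)
    also have "\<dots> = 0"
      using S c_cancels by (auto intro: sum.neutral)
    finally show "g S = (\<Sum>i<m. hs' i (S \<inter> Vs i))"
      using g_sum[OF S] by (simp add: hs'_def sum.distrib)
  qed
qed

theorem proposition2:
  fixes V :: "'a set" and f g :: "'a set \<Rightarrow> real" and r :: nat
  assumes "finite V"
    and "nonneg_on V f"
    and "\<forall>S. S \<subseteq> V \<longrightarrow> g S = f S - f {}"
  shows "(\<forall>S T. S \<subseteq> V \<longrightarrow> T \<subseteq> V \<longrightarrow> f S \<le> f T \<longrightarrow> 0 < g S \<longrightarrow>
            f T / f S \<le> g T / g S)
       \<and> (monotone_on_sets V f \<longrightarrow> nonneg_on V g \<and> monotone_on_sets V g)
       \<and> (supermodular_on V f \<longrightarrow> supermodular_on V g)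
       \<and> (monotone_on_sets V f \<and> supermodular_on V f \<and> decomposable V r f
            \<longrightarrow> decomposable V r g)"
proof (intro conjI impI allI)
  fix S T assume ST: "S \<subseteq> V" "T \<subseteq> V" "f S \<le> f T" "0 < g S"
  moreover have "0 \<le> f {}"
    using assms(2) by (simp add: nonneg_on_def)
  moreover have "g S = f S - f {}" "g T = f T - f {}"
    using ST(1,2) assms(3) by simp_all
  ultimately show "f T / f S \<le> g T / g S"
    using ratio_le_shifted_ratio[of "f {}" "f S" "f T"] by simp
next
  assume "monotone_on_sets V f"
  then show "nonneg_on V g" "monotone_on_sets V g"
    using nonneg_on_shift_empty monotone_on_sets_shift assms(3) by blast+
next
  assume "supermodular_on V f"
  then show "supermodular_on V g"
    using supermodular_on_shift assms(3) by blast
next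
  assume "monotone_on_sets V f \<and> supermodular_on V f \<and> decomposable V r f"
  then have "monotone_on_sets V f" "decomposable V r f"
    by simp_all
  moreover from this have "\<forall>v\<in>V. f {} \<le> f {v}"
    using monotone_on_setsD by blast
  ultimately show "decomposable V r g"
    using decomposable_shift_empty assms(1,3) by blast
qed

end
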